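(* Under the rank assumptions stated in the context, let $S_{jk}:=\{y+s v_j+t v_k: y\in \mathrm{relint}(F_{jk}), s> 0, t> 0\}$ for $1\leq j< k\leq d$ such that $F_{jk}$ is a facet of $F_j$. Then $S_{jk}\cap S_{j'k'}=\emptyset$ for any $\{ j,k \}\neq \{ j',k' \}$.
   Context: Let $d\geq 3$, let $v_1,\dots,v_d\in\mathbb{R}^d$ be distinct unit vectors and $b_1,\dots,b_d$ real numbers, and let $A=\{x\in \mathbb{R}^d:\ x\cdot v_j\leq b_j\ \text{for}\ j=1,\dots, d\}$ be a (possibly unbounded) convex polytope. For each $j$, $F_j$ denotes the (possible) facet of $A$ corresponding to $v_j$ (the part of $A$ on the hyperplane $\{x: x\cdot v_j=b_j\}$), and $F_{jk}=F_{kj}$ denotes the facet of the $(d-1)$-dimensional polytope $F_j$ created by intersecting with $F_k$, $k\neq j$; $\mathrm{relint}$ denotes relative interior. The following rank assumptions are imposed: for any $1\leq j<k\leq d$, if $\operatorname{rank} \begin{bmatrix} v_j & v_k \end{bmatrix}<2$, then $\operatorname{rank} \begin{bmatrix} v_j & v_k\end{bmatrix}<\operatorname{rank} \begin{bmatrix} v_j & v_k\\ b_j&b_k \end{bmatrix}$; for any $1\leq j<k<l\leq d$, if $\operatorname{rank} \begin{bmatrix} v_j & v_k & v_l\end{bmatrix}<3$, then $\operatorname{rank} \begin{bmatrix} v_j & v_k & v_l\end{bmatrix}<\operatorname{rank} \begin{bmatrix} v_j & v_k & v_l\\ b_j&b_k&b_l \end{bmatrix}$; for any $1\leq j<k<l<s\leq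 d$, if $\operatorname{rank} \begin{bmatrix} v_j & v_k & v_l& v_s\end{bmatrix}<4$, then $\operatorname{rank} \begin{bmatrix} v_j & v_k & v_l& v_s\end{bmatrix}<\operatorname{rank} \begin{bmatrix} v_j & v_k & v_l& v_s\\ b_j&b_k&b_l&b_s \end{bmatrix}$. *)

theory Defs
  imports "HOL-Analysis.Analysis"
begin

definition polyA :: "nat \<Rightarrow> (nat \<Rightarrow> real^'n) \<Rightarrow> (nat \<Rightarrow> real) \<Rightarrow> (real^'n) set" where
  "polyA d v b = {x. \<forall>j\<in>{1..d}. x \<bullet> v j \<le> b j}"

definition faceF :: "nat \<Rightarrow> (nat \<Rightarrow> real^'n) \<Rightarrow> (nat \<Rightarrow> real) \<Rightarrow> nat \<Rightarrow> (real^'n) set" where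
  "faceF d v b j = polyA d v b \<inter> {x. x \<bullet> v j = b j}"

definition faceF2 :: "nat \<Rightarrow> (nat \<Rightarrow> real^'n) \<Rightarrow> (nat \<Rightarrow> real) \<Rightarrow> nat \<Rightarrow> nat \<Rightarrow> (real^'n) set" where
  "faceF2 d v b j k = faceF d v b j \<inter> faceF d v b k"

definition wedgeS :: "nat \<Rightarrow> (nat \<Rightarrow> real^'n) \<Rightarrow> (nat \<Rightarrow> real) \<Rightarrow> nat \<Rightarrow> nat \<Rightarrow> (real^'n) set" where
  "wedgeS d v b j k = {y + s *\<^sub>R v j + t *\<^sub>R v k | y s t.
      y \<in> rel_interior (faceF2 d v b j k) \<and> s > 0 \<and> t > 0}"

text \<open>Rank of the matrix with columns v_i (i \<in> I) is dim of the set of columns;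
  the augmented matrix has columns (v_i, b_i) \<in> R^d \<times> R = R^(d+1).\<close>
definition rank_cols :: "(nat \<Rightarrow> real^'n) \<Rightarrow> nat set \<Rightarrow> nat" where
  "rank_cols v I = dim (v ` I)"

definition rank_aug :: "(nat \<Rightarrow> real^'n) \<Rightarrow> (nat \<Rightarrow> real) \<Rightarrow> nat set \<Rightarrow> nat" where
  "rank_aug v b I = dim ((\<lambda>i. (v i, b i)) ` I)"

definition rank_assumptions :: "nat \<Rightarrow> (nat \<Rightarrow> real^'n) \<Rightarrow> (nat \<Rightarrow> real) \<Rightarrow> bool" where
  "rank_assumptions d v b \<longleftrightarrow>
     (\<forall>j k. 1 \<le> j \<and> j < k \<and> k \<le> d \<longrightarrow>
        rank_cols v {j,k} < 2 \<longrightarrow> rank_cols v {j,k} < rank_aug v b {j,k}) \<and>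
     (\<forall>j k l. 1 \<le> j \<and> j < k \<and> k < l \<and> l \<le> d \<longrightarrow>
        rank_cols v {j,k,l} < 3 \<longrightarrow> rank_cols v {j,k,l} < rank_aug v b {j,k,l}) \<and>
     (\<forall>j k l s. 1 \<le> j \<and> j < k \<and> k < l \<and> l < s \<and> s \<le> d \<longrightarrow>
        rank_cols v {j,k,l,s} < 4 \<longrightarrow> rank_cols v {j,k,l,s} < rank_aug v b {j,k,l,s})"

end

theory Submission imports Defs begin

text \<open>Suppose p = y + s v_j + t v_k = y' + s' v_j' + t' v_k' lies in both wedges. Since
  p - y is a nonnegative combination of normals of constraints active at y, it lies in the normal
  cone of A at y, and likewise for y'; so y and y' are both the nearest point of A to p, hence
  y = y'. Thus the common point y satisfies x \<bullet> v_i = b_i for every i in I = {j, k, j', k'}, which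
  makes the augmented rank of I equal to the plain rank. On the other hand some v_i with i in
  {j, k} - {j', k'} is a combination of the other columns, so the plain rank is less than
  |I| \<in> {3, 4}, and the rank assumptions then force the augmented rank to be strictly larger.\<close>

lemma inner_obtuse_both_eq:
  fixes p y y' :: "'a::real_inner"
  assumes "(p - y) \<bullet> (y' - y) \<le> 0" and "(p - y') \<bullet> (y - y') \<le> 0"
  shows "y = y'"
proof -
  have "(y' - y) \<bullet> (y' - y) = (p - y) \<bullet> (y' - y) + (p - y') \<bullet> (y - y')"
    by (simp add: algebra_simps inner_diff_left inner_diff_right inner_commute)
  then have "(y' - y) \<bullet> (y' - y) \<le> 0" using assms by linarith
  then show ?thesis by (metis inner_ge_zero inner_eq_zero_iff order_antisym right_minus_eq)
qed

lemma faceF2_normal_cone: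
  assumes "y \<in> faceF2 d v b j k" and "z \<in> polyA d v b"
    and "j \<in> {1..d}" "k \<in> {1..d}" "s \<ge> 0" "t \<ge> 0"
  shows "(s *\<^sub>R v j + t *\<^sub>R v k) \<bullet> (z - y) \<le> 0"
proof -
  have "y \<bullet> v j = b j" "y \<bullet> v k = b k" "z \<bullet> v j \<le> b j" "z \<bullet> v k \<le> b k"
    using assms(1-4) unfolding faceF2_def faceF_def polyA_def by auto
  then have "(s *\<^sub>R v j + t *\<^sub>R v k) \<bullet> (z - y) = s * (z \<bullet> v j - b j) + t * (z \<bullet> v k - b k)"
    by (simp add: algebra_simps inner_add_left inner_diff_right inner_commute)
  also have "\<dots> \<le> 0"
    using assms(5,6) \<open>z \<bullet> v j \<le> b j\<close> \<open>z \<bullet> v k \<le> b k\<close>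
    by (intro add_nonpos_nonpos mult_nonneg_nonpos) auto
  finally show ?thesis .
qed

lemma wedge_base_points_eq:
  assumes "y \<in> faceF2 d v b j k" and "y' \<in> faceF2 d v b j' k'"
    and "j \<in> {1..d}" "k \<in> {1..d}" "j' \<in> {1..d}" "k' \<in> {1..d}"
    and "s \<ge> 0" "t \<ge> 0" "s' \<ge> 0" "t' \<ge> 0"
    and "y + s *\<^sub>R v j + t *\<^sub>R v k = y' + s' *\<^sub>R v j' + t' *\<^sub>R v k'"
  shows "y = y'"
proof (rule inner_obtuse_both_eq)
  let ?p = "y + s *\<^sub>R v j + t *\<^sub>R v k"
  have "y \<in> polyA d v b" "y' \<in> polyA d v b"
    using assms(1,2) unfolding faceF2_def faceF_def by auto
  have "?p - y = s *\<^sub>R v j + t *\<^sub>R v k" "?p - y' = s' *\<^sub>R v j' + t' *\<^sub>R v k'"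
    using assms(11) by (simp_all add: algebra_simps)
  then show "(?p - y) \<bullet> (y' - y) \<le> 0" "(?p - y') \<bullet> (y - y') \<le> 0"
    using faceF2_normal_cone[OF assms(1) \<open>y' \<in> polyA d v b\<close> assms(3,4,7,8)]
      faceF2_normal_cone[OF assms(2) \<open>y \<in> polyA d v b\<close> assms(5,6,9,10)] by simp_all
qed

lemma rank_cols_less_card:
  assumes "finite I" and "i \<in> I" and "v i \<in> span (v ` (I - {i}))"
  shows "rank_cols v I < card I"
proof -
  have "v ` I = insert (v i) (v ` (I - {i}))" using assms(2) by blast
  then have "rank_cols v I = dim (v ` (I - {i}))"
    using assms(3) by (simp add: rank_cols_def dim_insert)
  also have "\<dots> \<le> card (v ` (I - {i}))"
    using assms(1) by (intro dim_le_card) (auto intro: span_base)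
  also have "\<dots> \<le> card (I - {i})" using assms(1) by (intro card_image_le) simp
  also have "\<dots> < card I" using assms(1,2) by (rule card_Diff1_less)
  finally show ?thesis .
qed

lemma pair_combination_in_span:
  assumes "i \<in> {j, k}" "i \<notin> {j', k'}" "j \<noteq> k" "s > 0" "t > 0"
    and "s *\<^sub>R v j + t *\<^sub>R v k = s' *\<^sub>R v j' + t' *\<^sub>R v k'"
  shows "v i \<in> span (v ` ({j, k, j', k'} - {i}))"
proof -
  let ?S = "v ` ({j, k, j', k'} - {i})"
  let ?o = "if i = j then k else j" and ?r = "if i = j then s else t" and ?u = "if i = j then t else s"
  have "?r *\<^sub>R v i = s' *\<^sub>R v j' + t' *\<^sub>R v k' - ?u *\<^sub>R v ?o"
    using assms(1,6) by (auto simp: algebra_simps)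
  moreover have "v j' \<in> span ?S" "v k' \<in> span ?S" "v ?o \<in> span ?S"
    using assms(1-3) by (auto intro: span_base)
  ultimately have "?r *\<^sub>R v i \<in> span ?S" by (simp add: span_add span_diff span_scale)
  then have "inverse ?r *\<^sub>R ?r *\<^sub>R v i \<in> span ?S" by (rule span_scale)
  then show ?thesis using assms(4,5) by (simp split: if_splits)
qed

lemma card_two_pairs:
  assumes "j \<noteq> k" "j' \<noteq> k'" "{j, k} \<noteq> {j', k'}"
  shows "card {j, k, j', k'} = 3 \<or> card {j, k, j', k'} = 4"
proof -
  have "\<not> {j', k'} \<subseteq> {j, k}" using assms by auto
  then have "{j, k} \<subset> {j, k, j', k'}" by auto
  then have "card {j, k} < card {j, k, j', k'}" by (intro psubset_card_mono) auto
  moreover have "card {j, k, j', k'} \<le> 4"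
    using card_length[of "[j, k, j', k']"] by simp
  ultimately show ?thesis using assms(1) by simp linarith
qed

lemma rank_assumptions_card_3_4:
  assumes "rank_assumptions d v b" and "I \<subseteq> {1..d}" and "card I = 3 \<or> card I = 4"
    and "rank_cols v I < card I"
  shows "rank_cols v I < rank_aug v b I"
proof -
  define xs where "xs = sorted_list_of_set I"
  have "finite I" using assms(2) finite_subset by blast
  then have xs: "sorted_wrt (<) xs" "I = set xs" "length xs = card I"
    by (simp_all add: xs_def)
  from assms(3) show ?thesis
  proof
    assume "card I = 3"
    then obtain a c e where "xs = [a, c, e]"
      using xs(3) by (auto simp: numeral_eq_Suc length_Suc_conv)
    then show ?thesis
      using xs assms(1,2,4) \<open>card I = 3\<close> unfolding rank_assumptions_def by auto
  next
    assume "card I = 4"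
    then obtain a c e f where "xs = [a, c, e, f]"
      using xs(3) by (auto simp: numeral_eq_Suc length_Suc_conv)
    then show ?thesis
      using xs assms(1,2,4) \<open>card I = 4\<close> unfolding rank_assumptions_def by auto
  qed
qed

lemma rank_aug_le_rank_cols:
  fixes v :: "nat \<Rightarrow> real^'n"
  assumes "\<forall>i\<in>I. b i = v i \<bullet> y"
  shows "rank_aug v b I \<le> rank_cols v I"
proof -
  define f where "f = (\<lambda>z::real^'n. (z, z \<bullet> y))"
  have "linear f" unfolding f_def
    by (intro bounded_linear.linear bounded_linear_Pair bounded_linear_ident bounded_linear_inner_left)
  moreover have "(\<lambda>i. (v i, b i)) ` I = f ` (v ` I)"
    using assms by (force simp: f_def image_image)
  ultimately show ?thesis unfolding rank_aug_def rank_cols_def by (simp add: dim_image_le)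
qed

text \<open>Only the rank assumptions are needed: the facet, unit-norm, injectivity and dimension
  hypotheses are unused, and the bases of the wedges may range over all of F_jk.\<close>

theorem lemma6p3:
  fixes v :: "nat \<Rightarrow> real^'n" and b :: "nat \<Rightarrow> real" and d :: nat
  assumes "d = CARD('n)" and "d \<ge> 3"
    and "inj_on v {1..d}"
    and "\<forall>j\<in>{1..d}. norm (v j) = 1"
    and "rank_assumptions d v b"
    and "1 \<le> j" "j < k" "k \<le> d"
    and "faceF d v b j facet_of polyA d v b"
    and "faceF2 d v b j k facet_of faceF d v b j"
    and "1 \<le> j'" "j' < k'" "k' \<le> d"
    and "faceF d v b j' facet_of polyA d v b"
    and "faceF2 d v b j' k' facet_of faceF d v b j'"
    and "{j, k} \<noteq> {j', k'}"
  shows "wedgeS d v b j k \<inter> wedgeS d v b j' k' = {}"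
proof (rule ccontr)
  assume "wedgeS d v b j k \<inter> wedgeS d v b j' k' \<noteq> {}"
  then obtain y s t y' s' t' where
    y: "y \<in> faceF2 d v b j k" "s > 0" "t > 0" and y': "y' \<in> faceF2 d v b j' k'" "s' > 0" "t' > 0"
    and eq: "y + s *\<^sub>R v j + t *\<^sub>R v k = y' + s' *\<^sub>R v j' + t' *\<^sub>R v k'"
    unfolding wedgeS_def using rel_interior_subset by blast
  define I where "I = {j, k, j', k'}"
  have idx: "I \<subseteq> {1..d}" using assms(6-8,11-13) by (auto simp: I_def)
  have "y' = y"
    using wedge_base_points_eq[OF y(1) y'(1) _ _ _ _ _ _ _ _ eq] y y' idx by (simp add: I_def)
  then have "s *\<^sub>R v j + t *\<^sub>R v k = s' *\<^sub>R v j' + t' *\<^sub>R v k'" using eq by simp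
  moreover obtain i where "i \<in> {j, k}" "i \<notin> {j', k'}" using assms(7,12,16) by auto
  ultimately have "v i \<in> span (v ` (I - {i}))"
    using pair_combination_in_span[OF _ _ less_imp_neq[OF assms(7)] y(2,3)] unfolding I_def by blast
  then have "rank_cols v I < card I"
    by (intro rank_cols_less_card[of I i]) (use \<open>i \<in> {j, k}\<close> in \<open>auto simp: I_def\<close>)
  moreover have "card I = 3 \<or> card I = 4"
    using card_two_pairs[of j k j' k'] assms(7,12,16) unfolding I_def by simp
  ultimately have "rank_cols v I < rank_aug v b I"
    using rank_assumptions_card_3_4 assms(5) idx by blast
  moreover have "\<forall>i\<in>I. b i = v i \<bullet> y"
    using y(1) y'(1) \<open>y' = y\<close> unfolding I_def faceF2_def faceF_def by (auto simp: inner_commute)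
  ultimately show False using rank_aug_le_rank_cols[of I b v y] by simp
qed

end
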